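(* Let $\nu$ be an increasing function on $[0,\infty)$ such that $r\mapsto e^{-tr}\in L^1([0,\infty),d\nu)$ for all $t>0$, and such that there exist $C_\nu>0$, $s_0>0$ with $\nu(2s)\le C_\nu\nu(s)$ for all $s\ge s_0$. For $\alpha>0$ define $$\nu^\alpha(s):=\frac{1}{\Gamma(\alpha)}\int_0^s\int_0^r(r-\tilde r)^{\alpha-1}\,d\nu(\tilde r)\,dr.$$ Then $\nu^\alpha$ is increasing and defines a measure satisfying $$\int_0^\infty e^{-tr}\,d\nu^\alpha(r)=t^{-\alpha}\int_0^\infty e^{-tr}\,d\nu(r)\quad(t>0),$$ and $\nu^\alpha$ satisfies the doubling condition $\nu^\alpha(2s)\le C_\nu^2\,2^{2\alpha}\,\nu^\alpha(s)$ for all $s\ge 2s_0$.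
   Context: Integrals are Lebesgue–Stieltjes integrals with respect to the measures associated with the increasing functions. *)

theory Defs
  imports "HOL-Analysis.Analysis"
begin

text \<open>Lebesgue--Stieltjes measure on the real line associated with an increasing
  function on [0,inf): convention nu(0-) = 0 (the function is extended by 0 to
  the negative reals) and the right-continuous modification is used, so that
  the measure of [0,s] is nu(s+).\<close>
definition LS_measure :: "(real \<Rightarrow> real) \<Rightarrow> real measure" where
  "LS_measure \<nu> = interval_measure (\<lambda>x. if x < 0 then 0 else Lim (at_right x) \<nu>)"

definition nu_alpha :: "real \<Rightarrow> (real \<Rightarrow> real) \<Rightarrow> real \<Rightarrow> real" where
  "nu_alpha \<alpha> \<nu> s =
     (LINT r:{0..s}|lborel. (LINT x:{0..r}|LS_measure \<nu>. (r - x) powr (\<alpha> - 1))) / Gamma \<alpha>"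

end

theory Submission
  imports Defs "HOL-Real_Asymp.Real_Asymp"
begin

(* Let G be the right-continuous distribution function of nu and A(s) the integral of
   (s - x)^alpha over [0, s] with respect to d nu(x).  Exchanging the integrals in the
   definition of nu^alpha and integrating (r - x)^(alpha - 1) over r in [x, s] gives
   nu^alpha = A / Gamma(alpha + 1); hence nu^alpha is continuous and increasing, and it is
   its own distribution function.  The Laplace transform of a measure with distribution
   function F is t times the integral of exp(-t u) F(u) du.  For nu^alpha one more exchange
   of integrals, with the integral of exp(-t u) (u - x)^alpha over u >= x being
   Gamma(alpha + 1) exp(-t x) / t^(alpha + 1), produces the factor t^(-alpha).  Doubling
   follows from (s/2)^alpha G(s/2) <= A(s) and A(2s) <= (2s)^alpha G(2s), together with
   G(2s) <= C^2 G(s/2). *)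

section \<open>Laplace transforms and Riesz masses of measures on the half-line\<close>

definition laplace_stieltjes :: "real measure \<Rightarrow> real \<Rightarrow> ennreal" where
  "laplace_stieltjes M t = (\<integral>\<^sup>+r. ennreal (indicator {0..} r * exp (- (t * r))) \<partial>M)"

definition riesz_mass :: "real measure \<Rightarrow> real \<Rightarrow> real \<Rightarrow> ennreal" where
  "riesz_mass M \<alpha> s = (\<integral>\<^sup>+x. ennreal (if 0 \<le> x \<and> x \<le> s then (s - x) powr \<alpha> else 0) \<partial>M)"

definition riesz_density :: "real measure \<Rightarrow> real \<Rightarrow> real \<Rightarrow> real" where
  "riesz_density M \<alpha> r = (LINT x:{0..r}|M. (r - x) powr (\<alpha> - 1))"

lemma nn_integral_exp_tail:
  fixes t r :: real
  assumes "0 < t"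
  shows "(\<integral>\<^sup>+u. ennreal (t * exp (- (t * u))) * indicator {r..} u \<partial>lborel) = ennreal (exp (- (t * r)))"
proof -
  have "(\<integral>\<^sup>+u. ennreal (t * exp (- (t * u))) * indicator {r..} u \<partial>lborel) = ennreal (0 - (- exp (- (t * r))))"
  proof (rule nn_integral_FTC_atLeast)
    show "DERIV (\<lambda>u. - exp (- (t * u))) u :> t * exp (- (t * u))" for u
      by (rule derivative_eq_intros refl)+ simp
    show "((\<lambda>u. - exp (- (t * u))) \<longlongrightarrow> 0) at_top"
      using assms by real_asymp
  qed (use assms in auto)
  then show ?thesis by simp
qed

lemma nn_integral_shifted_powr:
  fixes \<alpha> x s :: real
  assumes "0 < \<alpha>" "x \<le> s"
  shows "(\<integral>\<^sup>+r. ennreal (if x \<le> r \<and> r \<le> s then (r - x) powr (\<alpha> - 1) else 0) \<partial>lborel)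
       = ennreal ((s - x) powr \<alpha> / \<alpha>)"
proof -
  define F where "F r = ennreal (if x \<le> r \<and> r \<le> s then (r - x) powr (\<alpha> - 1) else 0)" for r
  have "((\<lambda>y. y powr (\<alpha> - 1)) has_integral ((s - x) powr \<alpha> / \<alpha>)) {0..s - x}"
    using has_integral_powr_from_0[of "\<alpha> - 1" "s - x"] assms by simp
  then have powr: "(\<integral>\<^sup>+y. ennreal (indicator {0..s - x} y * y powr (\<alpha> - 1)) \<partial>lborel) = ennreal ((s - x) powr \<alpha> / \<alpha>)"
    by (intro nn_integral_has_integral_lebesgue) auto
  have "(\<integral>\<^sup>+r. F r \<partial>lborel) = ennreal \<bar>1\<bar> * (\<integral>\<^sup>+y. F (x + 1 * y) \<partial>lborel)"
    by (rule nn_integral_real_affine) (auto simp: F_def)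
  also have "\<dots> = (\<integral>\<^sup>+y. ennreal (indicator {0..s - x} y * y powr (\<alpha> - 1)) \<partial>lborel)"
    by (auto simp: F_def indicator_def intro!: nn_integral_cong)
  finally show ?thesis
    by (simp add: F_def powr)
qed

lemma nn_integral_exp_shifted_powr:
  fixes \<alpha> x t :: real
  assumes "-1 < \<alpha>" "0 < t"
  shows "(\<integral>\<^sup>+u. ennreal (if x \<le> u then exp (- (t * u)) * (u - x) powr \<alpha> else 0) \<partial>lborel)
       = ennreal (exp (- (t * x)) * Gamma (\<alpha> + 1) / t powr (\<alpha> + 1))"
proof -
  define F where "F u = ennreal (if x \<le> u then exp (- (t * u)) * (u - x) powr \<alpha> else 0)" for u
  have Gamma: "ennreal (Gamma (\<alpha> + 1)) = (\<integral>\<^sup>+v. ennreal (indicator {0..} v * v powr \<alpha> / exp v) \<partial>lborel)"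
    using Gamma_conv_nn_integral_real[of "\<alpha> + 1"] assms by simp
  have integrand: "F (x + 1 / t * v) = ennreal (exp (- (t * x)) / t powr \<alpha>) * ennreal (indicator {0..} v * v powr \<alpha> / exp v)" for v
  proof (cases "0 \<le> v")
    case True
    have "exp (- (t * (x + 1 / t * v))) = exp (- (t * x)) / exp v"
      using assms by (simp add: exp_diff[symmetric] algebra_simps)
    moreover have "(x + 1 / t * v - x) powr \<alpha> = v powr \<alpha> / t powr \<alpha>"
      using assms True by (simp add: powr_divide)
    ultimately show ?thesis
      using True assms by (simp add: F_def ennreal_mult[symmetric])
  next
    case False
    then show ?thesis
      using assms by (simp add: F_def field_simps)
  qed
  have "(\<integral>\<^sup>+u. F u \<partial>lborel) = ennreal \<bar>1 / t\<bar> * (\<integral>\<^sup>+v. F (x + 1 / t * v) \<partial>lborel)"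
    using assms by (intro nn_integral_real_affine) (auto simp: F_def)
  also have "\<dots> = ennreal (1 / t) * (ennreal (exp (- (t * x)) / t powr \<alpha>) * ennreal (Gamma (\<alpha> + 1)))"
    unfolding integrand using assms by (simp add: nn_integral_cmult Gamma[symmetric])
  also have "\<dots> = ennreal (1 / t * (exp (- (t * x)) / t powr \<alpha> * Gamma (\<alpha> + 1)))"
  proof -
    have "0 \<le> 1 / t" "0 \<le> exp (- (t * x)) / t powr \<alpha>" "0 \<le> Gamma (\<alpha> + 1)"
      using assms by (auto intro: less_imp_le Gamma_real_pos)
    then show ?thesis
      by (simp only: ennreal_mult[symmetric] mult_nonneg_nonneg)
  qed
  also have "1 / t * (exp (- (t * x)) / t powr \<alpha> * Gamma (\<alpha> + 1)) = exp (- (t * x)) * Gamma (\<alpha> + 1) / t powr (\<alpha> + 1)"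
    using assms by (simp add: powr_add field_simps)
  finally show ?thesis
    by (simp add: F_def)
qed

context
  fixes M :: "real measure"
  assumes sets_M [measurable_cong]: "sets M = sets borel"
begin

lemma set_integrable_exp_iff_laplace_finite:
  "set_integrable M {0..} (\<lambda>r. exp (- (t * r))) \<longleftrightarrow> laplace_stieltjes M t < \<infinity>"
  unfolding set_integrable_def laplace_stieltjes_def
  by (subst integrable_iff_bounded) (simp add: indicator_def if_distrib cong: if_cong)

lemma set_integral_exp_eq_laplace:
  "(LINT r:{0..}|M. exp (- (t * r))) = enn2real (laplace_stieltjes M t)"
  unfolding set_lebesgue_integral_def laplace_stieltjes_def
  by (subst integral_eq_nn_integral) (auto simp: indicator_def)

lemma riesz_density_eq_riesz_mass: "riesz_density M \<alpha> r = enn2real (riesz_mass M (\<alpha> - 1) r)"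
  unfolding riesz_density_def riesz_mass_def set_lebesgue_integral_def
  by (subst integral_eq_nn_integral)
     (auto simp: indicator_def intro!: arg_cong[where f=enn2real] nn_integral_cong)

end

locale sigma_finite_borel_measure = sigma_finite_measure M for M :: "real measure" +
  assumes sets_eq_borel [measurable_cong]: "sets M = sets borel"
begin

lemma pair_sigma_finite_lborel: "pair_sigma_finite M lborel"
  unfolding pair_sigma_finite_def
  using sigma_finite_measure_axioms lborel.sigma_finite_measure_axioms by simp

lemma borel_measurable_riesz_mass: "riesz_mass M \<beta> \<in> borel_measurable borel"
  using borel_measurable_nn_integral_fst[of "\<lambda>(s, x). ennreal (if 0 \<le> x \<and> x \<le> s then (s - x) powr \<beta> else 0)" lborel]
  unfolding riesz_mass_def[abs_def] by (simp add: measurable_split_conv)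

text \<open>Integration by parts: write \<open>exp (- (t * r))\<close> as the integral of \<open>t * exp (- (t * u))\<close>
  over \<open>u \<ge> r\<close> and exchange the order of integration.\<close>
lemma laplace_stieltjes_eq_nn_integral_mass:
  assumes "0 < t"
  shows "laplace_stieltjes M t
       = (\<integral>\<^sup>+u. ennreal (indicator {0..} u * t * exp (- (t * u))) * emeasure M {0..u} \<partial>lborel)"
proof -
  define h where "h r u = ennreal (if 0 \<le> r \<and> r \<le> u then t * exp (- (t * u)) else 0)" for r u
  have h_measurable: "(\<lambda>(r, u). h r u) \<in> borel_measurable (M \<Otimes>\<^sub>M lborel)"
    unfolding h_def by measurable
  have "laplace_stieltjes M t = (\<integral>\<^sup>+r. (\<integral>\<^sup>+u. h r u \<partial>lborel) \<partial>M)"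
    unfolding laplace_stieltjes_def
  proof (intro nn_integral_cong)
    fix r
    show "ennreal (indicator {0..} r * exp (- (t * r))) = (\<integral>\<^sup>+u. h r u \<partial>lborel)"
    proof (cases "0 \<le> r")
      case True
      then have "(\<integral>\<^sup>+u. h r u \<partial>lborel) = (\<integral>\<^sup>+u. ennreal (t * exp (- (t * u))) * indicator {r..} u \<partial>lborel)"
        unfolding h_def by (intro nn_integral_cong) (auto simp: indicator_def)
      with True show ?thesis by (simp add: nn_integral_exp_tail[OF assms])
    qed (simp add: h_def)
  qed
  also have "\<dots> = (\<integral>\<^sup>+u. (\<integral>\<^sup>+r. h r u \<partial>M) \<partial>lborel)"
    using pair_sigma_finite.Fubini'[OF pair_sigma_finite_lborel h_measurable] by simp
  also have "\<dots> = (\<integral>\<^sup>+u. ennreal (indicator {0..} u * t * exp (- (t * u))) * emeasure M {0..u} \<partial>lborel)"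
  proof (intro nn_integral_cong)
    fix u
    have "(\<integral>\<^sup>+r. h r u \<partial>M) = (\<integral>\<^sup>+r. ennreal (indicator {0..} u * t * exp (- (t * u))) * indicator {0..u} r \<partial>M)"
      unfolding h_def by (intro nn_integral_cong) (auto simp: indicator_def)
    then show "(\<integral>\<^sup>+r. h r u \<partial>M) = ennreal (indicator {0..} u * t * exp (- (t * u))) * emeasure M {0..u}"
      by (simp add: nn_integral_cmult_indicator)
  qed
  finally show ?thesis .
qed

end

locale riesz_kernel = sigma_finite_borel_measure +
  fixes \<alpha> :: real
  assumes alpha_pos: "0 < \<alpha>"
    and emeasure_Icc_finite: "\<And>s. emeasure M {0..s} < \<infinity>"
begin

lemma riesz_mass_le: "0 \<le> s \<Longrightarrow> riesz_mass M \<alpha> s \<le> ennreal (s powr \<alpha>) * emeasure M {0..s}"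
  unfolding riesz_mass_def
  by (subst nn_integral_cmult_indicator[symmetric], measurable)
     (auto simp: indicator_def alpha_pos less_imp_le intro!: nn_integral_mono powr_mono2)

lemma riesz_mass_ge:
  "0 \<le> a \<Longrightarrow> a \<le> s \<Longrightarrow> ennreal ((s - a) powr \<alpha>) * emeasure M {0..a} \<le> riesz_mass M \<alpha> s"
  unfolding riesz_mass_def
  by (subst nn_integral_cmult_indicator[symmetric], measurable)
     (auto simp: indicator_def alpha_pos less_imp_le intro!: nn_integral_mono powr_mono2)

lemma riesz_mass_mono: "s \<le> s' \<Longrightarrow> riesz_mass M \<alpha> s \<le> riesz_mass M \<alpha> s'"
  unfolding riesz_mass_def
  by (intro nn_integral_mono) (auto intro!: powr_mono2 simp: alpha_pos less_imp_le)

lemma riesz_mass_finite: "riesz_mass M \<alpha> s < \<infinity>"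
proof -
  have "riesz_mass M \<alpha> s \<le> ennreal (max 0 s powr \<alpha>) * emeasure M {0..max 0 s}"
    by (rule order_trans[OF riesz_mass_mono riesz_mass_le]) auto
  then show ?thesis
    using emeasure_Icc_finite[of "max 0 s"] by (simp add: ennreal_mult_less_top le_less_trans)
qed

lemma riesz_mass_doubling:
  assumes "0 \<le> s" "0 \<le> K" and mass: "emeasure M {0..2 * s} \<le> ennreal K * emeasure M {0..s / 2}"
  shows "riesz_mass M \<alpha> (2 * s) \<le> ennreal (K * 2 powr (2 * \<alpha>)) * riesz_mass M \<alpha> s"
proof -
  have powr: "(2 * s) powr \<alpha> = 2 powr (2 * \<alpha>) * (s - s / 2) powr \<alpha>"
    using assms by (simp add: powr_mult[symmetric] powr_powr[of 2 2, symmetric])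
  have "riesz_mass M \<alpha> (2 * s) \<le> ennreal ((2 * s) powr \<alpha>) * (ennreal K * emeasure M {0..s / 2})"
    by (rule order_trans[OF riesz_mass_le]) (use assms in \<open>auto intro: mult_left_mono\<close>)
  also have "\<dots> = ennreal (K * 2 powr (2 * \<alpha>)) * (ennreal ((s - s / 2) powr \<alpha>) * emeasure M {0..s / 2})"
    unfolding powr using assms by (simp add: ennreal_mult mult_ac)
  also have "\<dots> \<le> ennreal (K * 2 powr (2 * \<alpha>)) * riesz_mass M \<alpha> s"
    using assms by (intro mult_left_mono riesz_mass_ge) auto
  finally show ?thesis .
qed

lemma borel_measurable_riesz_density: "riesz_density M \<alpha> \<in> borel_measurable borel"
  unfolding riesz_density_eq_riesz_mass[OF sets_eq_borel, abs_def] using borel_measurable_riesz_mass by measurable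

lemma nn_integral_Icc_riesz_mass:
  "(\<integral>\<^sup>+r. indicator {0..s} r * riesz_mass M (\<alpha> - 1) r \<partial>lborel) = ennreal (1 / \<alpha>) * riesz_mass M \<alpha> s"
proof -
  define k where "k x r = ennreal (if 0 \<le> x \<and> x \<le> r \<and> r \<le> s then (r - x) powr (\<alpha> - 1) else 0)" for x r
  have k_measurable: "(\<lambda>(x, r). k x r) \<in> borel_measurable (M \<Otimes>\<^sub>M lborel)"
    unfolding k_def by measurable
  have "(\<integral>\<^sup>+r. indicator {0..s} r * riesz_mass M (\<alpha> - 1) r \<partial>lborel) = (\<integral>\<^sup>+r. (\<integral>\<^sup>+x. k x r \<partial>M) \<partial>lborel)"
  proof (intro nn_integral_cong)
    fix r
    show "indicator {0..s} r * riesz_mass M (\<alpha> - 1) r = (\<integral>\<^sup>+x. k x r \<partial>M)"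
    proof (cases "r \<in> {0..s}")
      case False
      then have "k x r = 0" for x
        unfolding k_def by auto
      with False show ?thesis by simp
    qed (auto simp: k_def riesz_mass_def intro!: nn_integral_cong)
  qed
  also have "\<dots> = (\<integral>\<^sup>+x. (\<integral>\<^sup>+r. k x r \<partial>lborel) \<partial>M)"
    by (rule pair_sigma_finite.Fubini'[OF pair_sigma_finite_lborel k_measurable])
  also have "\<dots> = (\<integral>\<^sup>+x. ennreal (1 / \<alpha>) * ennreal (if 0 \<le> x \<and> x \<le> s then (s - x) powr \<alpha> else 0) \<partial>M)"
  proof (intro nn_integral_cong)
    fix x
    show "(\<integral>\<^sup>+r. k x r \<partial>lborel) = ennreal (1 / \<alpha>) * ennreal (if 0 \<le> x \<and> x \<le> s then (s - x) powr \<alpha> else 0)"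
    proof (cases "0 \<le> x \<and> x \<le> s")
      case True
      then have "(\<integral>\<^sup>+r. k x r \<partial>lborel)
          = (\<integral>\<^sup>+r. ennreal (if x \<le> r \<and> r \<le> s then (r - x) powr (\<alpha> - 1) else 0) \<partial>lborel)"
        unfolding k_def by (intro nn_integral_cong) auto
      with True show ?thesis
        using alpha_pos by (simp add: nn_integral_shifted_powr ennreal_mult[symmetric] less_imp_le)
    next
      case False
      then have "k x r = 0" for r
        unfolding k_def by auto
      with False show ?thesis
        by (simp only: if_not_P) simp
    qed
  qed
  also have "\<dots> = ennreal (1 / \<alpha>) * riesz_mass M \<alpha> s"
    unfolding riesz_mass_def by (rule nn_integral_cmult) measurable
  finally show ?thesis .
qed

lemma riesz_density_set_integral:
  assumes "0 \<le> s"
  shows set_integrable_riesz_density: "set_integrable lborel {0..s} (riesz_density M \<alpha>)"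
    and set_integral_riesz_density:
      "(LINT r:{0..s}|lborel. riesz_density M \<alpha> r) = enn2real (riesz_mass M \<alpha> s) / \<alpha>"
proof -
  have "(\<integral>\<^sup>+r. indicator {0..s} r * riesz_mass M (\<alpha> - 1) r \<partial>lborel) \<noteq> \<infinity>"
    using riesz_mass_finite[of s] by (simp add: nn_integral_Icc_riesz_mass ennreal_mult_eq_top_iff)
  then have "AE r in lborel. indicator {0..s} r * riesz_mass M (\<alpha> - 1) r \<noteq> \<infinity>"
    by (intro nn_integral_PInf_AE) (use borel_measurable_riesz_mass in measurable)
  then have "(\<integral>\<^sup>+r. ennreal (indicator {0..s} r *\<^sub>R riesz_density M \<alpha> r) \<partial>lborel)
      = (\<integral>\<^sup>+r. indicator {0..s} r * riesz_mass M (\<alpha> - 1) r \<partial>lborel)"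
    by (intro nn_integral_cong_AE, eventually_elim)
       (auto simp: indicator_def riesz_density_eq_riesz_mass[OF sets_eq_borel] less_top)
  then have nn_integral: "(\<integral>\<^sup>+r. ennreal (indicator {0..s} r *\<^sub>R riesz_density M \<alpha> r) \<partial>lborel)
      = ennreal (1 / \<alpha>) * riesz_mass M \<alpha> s"
    by (simp add: nn_integral_Icc_riesz_mass)
  have measurable: "(\<lambda>r. indicator {0..s} r *\<^sub>R riesz_density M \<alpha> r) \<in> borel_measurable lborel"
    using borel_measurable_riesz_density by measurable
  have nonneg: "0 \<le> riesz_density M \<alpha> r" for r
    by (simp add: riesz_density_eq_riesz_mass[OF sets_eq_borel])
  show "set_integrable lborel {0..s} (riesz_density M \<alpha>)"
    unfolding set_integrable_def
    by (rule integrableI_nonneg[OF measurable])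
       (use nn_integral riesz_mass_finite nonneg in \<open>auto simp: ennreal_mult_less_top indicator_def\<close>)
  have "(LINT r:{0..s}|lborel. riesz_density M \<alpha> r) = enn2real (ennreal (1 / \<alpha>) * riesz_mass M \<alpha> s)"
    unfolding set_lebesgue_integral_def nn_integral[symmetric]
    by (rule integral_eq_nn_integral[OF measurable]) (simp add: nonneg)
  also have "\<dots> = enn2real (riesz_mass M \<alpha> s) / \<alpha>"
    using alpha_pos by (simp add: enn2real_mult)
  finally show "(LINT r:{0..s}|lborel. riesz_density M \<alpha> r) = enn2real (riesz_mass M \<alpha> s) / \<alpha>" .
qed

lemma continuous_on_set_integral_riesz_density:
  "0 \<le> b \<Longrightarrow> continuous_on {0..b} (\<lambda>s. LINT r:{0..s}|lborel. riesz_density M \<alpha> r)"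
  using indefinite_integral_continuous_1[OF set_borel_integral_eq_integral(1)[OF set_integrable_riesz_density]]
  by (rule continuous_on_eq) (auto simp: set_borel_integral_eq_integral(2)[OF set_integrable_riesz_density])

lemma laplace_riesz_mass:
  assumes "0 < t"
  shows "(\<integral>\<^sup>+u. ennreal (indicator {0..} u * exp (- (t * u))) * riesz_mass M \<alpha> u \<partial>lborel)
       = ennreal (Gamma (\<alpha> + 1) / t powr (\<alpha> + 1)) * laplace_stieltjes M t"
proof -
  define q where "q u x = ennreal (if 0 \<le> x \<and> x \<le> u then exp (- (t * u)) * (u - x) powr \<alpha> else 0)" for u x
  have q_measurable: "(\<lambda>(u, x). q u x) \<in> borel_measurable (lborel \<Otimes>\<^sub>M M)"
    unfolding q_def by measurable
  have "(\<integral>\<^sup>+u. ennreal (indicator {0..} u * exp (- (t * u))) * riesz_mass M \<alpha> u \<partial>lborel)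
      = (\<integral>\<^sup>+u. (\<integral>\<^sup>+x. q u x \<partial>M) \<partial>lborel)"
  proof (intro nn_integral_cong)
    fix u
    show "ennreal (indicator {0..} u * exp (- (t * u))) * riesz_mass M \<alpha> u = (\<integral>\<^sup>+x. q u x \<partial>M)"
    proof (cases "0 \<le> u")
      case True
      then show ?thesis
        unfolding riesz_mass_def q_def
        by (auto simp: ennreal_mult nn_integral_cmult[symmetric] intro!: nn_integral_cong)
    next
      case False
      then have "q u x = 0" for x
        unfolding q_def by auto
      with False show ?thesis by simp
    qed
  qed
  also have "\<dots> = (\<integral>\<^sup>+x. (\<integral>\<^sup>+u. q u x \<partial>lborel) \<partial>M)"
    using pair_sigma_finite.Fubini'[OF pair_sigma_finite_lborel, of "\<lambda>x u. q u x"] q_measurable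
    by (simp add: measurable_pair_swap_iff[symmetric] case_prod_beta)
  also have "\<dots> = (\<integral>\<^sup>+x. ennreal (Gamma (\<alpha> + 1) / t powr (\<alpha> + 1)) * ennreal (indicator {0..} x * exp (- (t * x))) \<partial>M)"
  proof (intro nn_integral_cong)
    fix x
    show "(\<integral>\<^sup>+u. q u x \<partial>lborel)
        = ennreal (Gamma (\<alpha> + 1) / t powr (\<alpha> + 1)) * ennreal (indicator {0..} x * exp (- (t * x)))"
    proof (cases "0 \<le> x")
      case True
      then have "(\<integral>\<^sup>+u. q u x \<partial>lborel)
          = ennreal (exp (- (t * x)) * Gamma (\<alpha> + 1) / t powr (\<alpha> + 1))"
        unfolding q_def using nn_integral_exp_shifted_powr[of \<alpha> t x] alpha_pos assms by simp
      with True show ?thesis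
        using alpha_pos by (simp add: ennreal_mult[symmetric] Gamma_real_pos less_imp_le mult_ac)
    qed (simp add: q_def)
  qed
  also have "\<dots> = ennreal (Gamma (\<alpha> + 1) / t powr (\<alpha> + 1)) * laplace_stieltjes M t"
    unfolding laplace_stieltjes_def by (rule nn_integral_cmult) measurable
  finally show ?thesis .
qed

end

section \<open>Right-continuous distribution functions\<close>

locale stieltjes_cdf =
  fixes G :: "real \<Rightarrow> real"
  assumes mono: "\<And>x y. x \<le> y \<Longrightarrow> G x \<le> G y"
    and continuous_at_right: "\<And>a. continuous (at_right a) G"
    and vanishes_neg: "\<And>x. x < 0 \<Longrightarrow> G x = 0"
begin

lemma nonneg: "0 \<le> G x"
  using mono[of "min x (-1)" x] vanishes_neg[of "min x (-1)"] by simp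

lemma emeasure_Ioc: "a \<le> b \<Longrightarrow> emeasure (interval_measure G) {a<..b} = G b - G a"
  by (rule emeasure_interval_measure_Ioc) (auto intro: mono continuous_at_right)

lemma emeasure_Icc_0:
  assumes "0 \<le> u"
  shows "emeasure (interval_measure G) {0..u} = G u"
proof -
  have "{-1<..<0} = (\<Union>n. {-1<..-1 / Suc n})"
  proof (intro set_eqI iffI)
    fix x :: real
    assume x: "x \<in> {-1<..<0}"
    then obtain n where "inverse (Suc n) < -x"
      using reals_Archimedean[of "-x"] by auto
    with x have "x \<in> {-1<..-1 / Suc n}"
      by (auto simp: inverse_eq_divide)
    then show "x \<in> (\<Union>n. {-1<..-1 / Suc n})"
      by blast
  next
    fix x :: real
    assume "x \<in> (\<Union>n. {-1<..-1 / Suc n})"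
    then obtain n where "-1 < x" "x \<le> -1 / Suc n"
      by auto
    moreover have "-1 / Suc n < (0::real)"
      by simp
    ultimately have "-1 < x \<and> x < 0"
      by linarith
    then show "x \<in> {-1<..<0}"
      by simp
  qed
  moreover have "{-1<..-1 / Suc n} \<in> null_sets (interval_measure G)" for n
    using emeasure_Ioc[of "-1" "-1 / Suc n"] by (simp add: vanishes_neg null_sets_def)
  ultimately have "{-1<..<0} \<in> null_sets (interval_measure G)"
    by (metis null_sets_UN)
  then have "emeasure (interval_measure G) ({-1<..u} - {-1<..<0}) = G u - G (-1)"
    using assms by (simp add: emeasure_Diff_null_set emeasure_Ioc)
  moreover have "{-1<..u} - {-1<..<0} = {0..u}"
    using assms by auto
  ultimately show ?thesis
    by (simp add: vanishes_neg)
qed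

lemma sigma_finite_borel_interval_measure: "sigma_finite_borel_measure (interval_measure G)"
proof (intro sigma_finite_borel_measure.intro sigma_finite_borel_measure_axioms.intro)
  show "sigma_finite_measure (interval_measure G)"
    by (rule sigma_finite_interval_measure[OF mono continuous_at_right])
qed (rule sets_interval_measure)

lemma riesz_kernel_interval_measure: "0 < \<alpha> \<Longrightarrow> riesz_kernel (interval_measure G) \<alpha>"
proof (intro riesz_kernel.intro riesz_kernel_axioms.intro sigma_finite_borel_interval_measure)
  show "emeasure (interval_measure G) {0..s} < \<infinity>" for s
    by (cases "0 \<le> s") (simp_all add: emeasure_Icc_0)
qed

end

definition LS_cdf :: "(real \<Rightarrow> real) \<Rightarrow> real \<Rightarrow> real" where
  "LS_cdf f x = (if x < 0 then 0 else Lim (at_right x) f)"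

lemma LS_measure_eq_interval_measure: "LS_measure f = interval_measure (LS_cdf f)"
  unfolding LS_measure_def LS_cdf_def ..

lemma sets_LS_measure [simp, measurable_cong]: "sets (LS_measure f) = sets borel"
  by (simp add: LS_measure_eq_interval_measure)

lemma LS_cdf_eq_self: "0 \<le> x \<Longrightarrow> continuous (at_right x) f \<Longrightarrow> LS_cdf f x = f x"
  unfolding LS_cdf_def continuous_within by (simp add: tendsto_Lim)

locale nonneg_increasing =
  fixes f :: "real \<Rightarrow> real"
  assumes mono_on_nonneg: "mono_on {0..} f"
    and nonneg_0: "0 \<le> f 0"
begin

lemma mono: "0 \<le> a \<Longrightarrow> a \<le> b \<Longrightarrow> f a \<le> f b"
  using mono_on_nonneg by (auto simp: mono_on_def)

lemma tendsto_LS_cdf: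
  assumes "0 \<le> x"
  shows "(f \<longlongrightarrow> LS_cdf f x) (at_right x)"
proof -
  have "(f \<longlongrightarrow> Inf (f ` ({x<..} \<inter> {0..}))) (at x within ({x<..} \<inter> {0..}))"
    by (rule Lim_right_bound[where K="f 0"]) (use assms in \<open>auto intro: mono\<close>)
  moreover have "{x<..} \<inter> {0..} = {x<..}"
    using assms by auto
  ultimately have "(f \<longlongrightarrow> Inf (f ` {x<..})) (at_right x)"
    by simp
  with assms show ?thesis
    unfolding LS_cdf_def by (simp add: tendsto_Lim)
qed

lemma le_LS_cdf: "0 \<le> x \<Longrightarrow> f x \<le> LS_cdf f x"
  by (rule tendsto_lowerbound[OF tendsto_LS_cdf])
     (auto simp: eventually_at_right_field intro!: exI[of _ "x + 1"] mono)

lemma LS_cdf_le: "0 \<le> x \<Longrightarrow> x < y \<Longrightarrow> LS_cdf f x \<le> f y"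
  by (rule tendsto_upperbound[OF tendsto_LS_cdf])
     (auto simp: eventually_at_right_field intro!: exI[of _ y] mono)

lemma LS_cdf_nonneg: "0 \<le> LS_cdf f x"
  using le_LS_cdf[of x] mono[of 0 x] nonneg_0 by (auto simp: LS_cdf_def)

lemma LS_cdf_mono:
  assumes "x \<le> y"
  shows "LS_cdf f x \<le> LS_cdf f y"
proof (cases "x < 0")
  case True
  then show ?thesis
    using LS_cdf_nonneg[of y] by (simp add: LS_cdf_def)
next
  case False
  with assms show ?thesis
    by (intro tendsto_lowerbound[OF tendsto_LS_cdf])
       (auto simp: eventually_at_right_field intro!: exI[of _ "y + 1"] LS_cdf_le)
qed

lemma continuous_at_right_LS_cdf: "continuous (at_right a) (LS_cdf f)"
proof (cases "a < 0")
  case True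
  then have "eventually (\<lambda>y. LS_cdf f y = LS_cdf f a) (at_right a)"
    by (auto simp: LS_cdf_def eventually_at_right_field intro!: exI[of _ 0])
  then show ?thesis
    unfolding continuous_within by (rule tendsto_eventually)
next
  case False
  then have a: "0 \<le> a" by simp
  have "filterlim (\<lambda>y. 2 * y - a) (at_right a) (at_right a)"
    unfolding filterlim_at
    by (auto simp: eventually_at_right_field intro!: exI[of _ "a + 1"] tendsto_eq_intros)
  then have upper: "((\<lambda>y. f (2 * y - a)) \<longlongrightarrow> LS_cdf f a) (at_right a)"
    by (rule filterlim_compose[OF tendsto_LS_cdf[OF a]])
  show ?thesis
    unfolding continuous_within
  proof (rule tendsto_sandwich[OF _ _ tendsto_LS_cdf[OF a] upper])
    show "eventually (\<lambda>y. f y \<le> LS_cdf f y) (at_right a)"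
      using a by (auto simp: eventually_at_right_less eventually_at_right_field intro!: exI[of _ "a + 1"] le_LS_cdf)
    show "eventually (\<lambda>y. LS_cdf f y \<le> f (2 * y - a)) (at_right a)"
      using a by (auto simp: eventually_at_right_field intro!: exI[of _ "a + 1"] LS_cdf_le)
  qed
qed

lemma stieltjes_cdf_LS_cdf: "stieltjes_cdf (LS_cdf f)"
proof
  show "LS_cdf f x \<le> LS_cdf f y" if "x \<le> y" for x y
    using that by (rule LS_cdf_mono)
  show "continuous (at_right a) (LS_cdf f)" for a
    by (rule continuous_at_right_LS_cdf)
  show "LS_cdf f x = 0" if "x < 0" for x
    using that by (simp add: LS_cdf_def)
qed

lemma LS_cdf_doubling:
  assumes doubling: "\<forall>s\<ge>s\<^sub>0. f (2 * s) \<le> C * f s" and "0 \<le> s\<^sub>0" "s\<^sub>0 \<le> s"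
  shows "LS_cdf f (2 * s) \<le> C * LS_cdf f s"
proof -
  have "filterlim (\<lambda>y. 2 * y) (at_right (2 * s)) (at_right s)"
    unfolding filterlim_at
    by (auto simp: eventually_at_right_field intro!: exI[of _ "s + 1"] tendsto_eq_intros)
  moreover have "0 \<le> 2 * s"
    using assms by simp
  ultimately have "((\<lambda>y. f (2 * y)) \<longlongrightarrow> LS_cdf f (2 * s)) (at_right s)"
    by (intro filterlim_compose[OF tendsto_LS_cdf])
  moreover have "((\<lambda>y. C * f y) \<longlongrightarrow> C * LS_cdf f s) (at_right s)"
    using assms by (intro tendsto_intros tendsto_LS_cdf) simp
  moreover have "eventually (\<lambda>y. f (2 * y) \<le> C * f y) (at_right s)"
    using doubling assms by (auto simp: eventually_at_right_less eventually_at_right_field intro!: exI[of _ "s + 1"])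
  ultimately show ?thesis
    by (intro tendsto_le[OF trivial_limit_at_right_real])
qed

end

section \<open>The fractional primitive\<close>

locale fractional_primitive = nonneg_increasing \<nu> for \<nu> +
  fixes \<alpha> :: real
  assumes alpha_pos: "0 < \<alpha>"
begin

lemma riesz_kernel_LS_measure: "riesz_kernel (LS_measure \<nu>) \<alpha>"
  unfolding LS_measure_eq_interval_measure
  by (rule stieltjes_cdf.riesz_kernel_interval_measure[OF stieltjes_cdf_LS_cdf alpha_pos])

lemma Gamma_succ: "Gamma (\<alpha> + 1) = \<alpha> * Gamma \<alpha>"
  using alpha_pos by (intro Gamma_plus1) (auto elim!: nonpos_Ints_cases)

lemma nu_alpha_eq_set_integral:
  "nu_alpha \<alpha> \<nu> s = (LINT r:{0..s}|lborel. riesz_density (LS_measure \<nu>) \<alpha> r) / Gamma \<alpha>"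
  unfolding nu_alpha_def riesz_density_def ..

lemma nu_alpha_eq_riesz_mass:
  "0 \<le> s \<Longrightarrow> nu_alpha \<alpha> \<nu> s = enn2real (riesz_mass (LS_measure \<nu>) \<alpha> s) / Gamma (\<alpha> + 1)"
  by (simp add: nu_alpha_eq_set_integral Gamma_succ
      riesz_kernel.set_integral_riesz_density[OF riesz_kernel_LS_measure])

lemma mono_on_nu_alpha: "mono_on {0..} (nu_alpha \<alpha> \<nu>)"
proof (rule mono_onI)
  fix a b :: real
  assume "a \<in> {0..}" "b \<in> {0..}" "a \<le> b"
  then show "nu_alpha \<alpha> \<nu> a \<le> nu_alpha \<alpha> \<nu> b"
    using riesz_kernel.riesz_mass_mono[OF riesz_kernel_LS_measure]
      riesz_kernel.riesz_mass_finite[OF riesz_kernel_LS_measure] alpha_pos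
    by (auto simp: nu_alpha_eq_riesz_mass Gamma_real_pos intro!: divide_right_mono enn2real_mono)
qed

lemma nonneg_increasing_nu_alpha: "nonneg_increasing (nu_alpha \<alpha> \<nu>)"
  using mono_on_nu_alpha alpha_pos
  by unfold_locales (simp_all add: nu_alpha_eq_riesz_mass Gamma_real_pos)

lemma LS_cdf_nu_alpha:
  assumes "0 \<le> s"
  shows "LS_cdf (nu_alpha \<alpha> \<nu>) s = nu_alpha \<alpha> \<nu> s"
proof (rule LS_cdf_eq_self[OF assms])
  have "continuous_on {0..s + 1} (\<lambda>s. LINT r:{0..s}|lborel. riesz_density (LS_measure \<nu>) \<alpha> r)"
    using assms by (intro riesz_kernel.continuous_on_set_integral_riesz_density[OF riesz_kernel_LS_measure]) simp
  then have "continuous_on {s..s + 1} (nu_alpha \<alpha> \<nu>)"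
    unfolding nu_alpha_eq_set_integral[abs_def] using assms Gamma_real_pos[OF alpha_pos]
    by (intro continuous_on_divide continuous_on_const) (auto elim: continuous_on_subset)
  then show "continuous (at_right s) (nu_alpha \<alpha> \<nu>)"
    unfolding continuous_within by (rule continuous_on_Icc_at_rightD) simp
qed

lemma laplace_stieltjes_nu_alpha:
  assumes t: "0 < t"
  shows "laplace_stieltjes (LS_measure (nu_alpha \<alpha> \<nu>)) t
       = ennreal (t powr - \<alpha>) * laplace_stieltjes (LS_measure \<nu>) t"
proof -
  let ?\<mu> = "LS_measure \<nu>" and ?\<mu>\<alpha> = "LS_measure (nu_alpha \<alpha> \<nu>)"
  interpret R: riesz_kernel ?\<mu> \<alpha>
    by (rule riesz_kernel_LS_measure)
  interpret G\<alpha>: stieltjes_cdf "LS_cdf (nu_alpha \<alpha> \<nu>)"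
    by (rule nonneg_increasing.stieltjes_cdf_LS_cdf[OF nonneg_increasing_nu_alpha])
  have "laplace_stieltjes ?\<mu>\<alpha> t
      = (\<integral>\<^sup>+u. ennreal (indicator {0..} u * t * exp (- (t * u))) * emeasure ?\<mu>\<alpha> {0..u} \<partial>lborel)"
    using sigma_finite_borel_measure.laplace_stieltjes_eq_nn_integral_mass[OF G\<alpha>.sigma_finite_borel_interval_measure t]
    by (simp add: LS_measure_eq_interval_measure)
  also have "\<dots> = (\<integral>\<^sup>+u. ennreal (t / Gamma (\<alpha> + 1))
      * (ennreal (indicator {0..} u * exp (- (t * u))) * riesz_mass ?\<mu> \<alpha> u) \<partial>lborel)"
  proof (intro nn_integral_cong)
    fix u
    show "ennreal (indicator {0..} u * t * exp (- (t * u))) * emeasure ?\<mu>\<alpha> {0..u}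
        = ennreal (t / Gamma (\<alpha> + 1)) * (ennreal (indicator {0..} u * exp (- (t * u))) * riesz_mass ?\<mu> \<alpha> u)"
    proof (cases "0 \<le> u")
      case True
      define a where "a = enn2real (riesz_mass ?\<mu> \<alpha> u)"
      have a: "riesz_mass ?\<mu> \<alpha> u = ennreal a" "0 \<le> a"
        using R.riesz_mass_finite[of u] by (auto simp: a_def)
      have "emeasure ?\<mu>\<alpha> {0..u} = ennreal (a / Gamma (\<alpha> + 1))"
        using True by (simp add: LS_measure_eq_interval_measure G\<alpha>.emeasure_Icc_0 LS_cdf_nu_alpha
            nu_alpha_eq_riesz_mass a_def)
      moreover have "t * exp (- (t * u)) * (a / Gamma (\<alpha> + 1)) = t / Gamma (\<alpha> + 1) * (exp (- (t * u)) * a)"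
        by simp
      ultimately show ?thesis
        using True t alpha_pos a by (simp add: ennreal_mult[symmetric] Gamma_real_pos)
    qed simp
  qed
  also have "\<dots> = ennreal (t / Gamma (\<alpha> + 1))
      * (\<integral>\<^sup>+u. ennreal (indicator {0..} u * exp (- (t * u))) * riesz_mass ?\<mu> \<alpha> u \<partial>lborel)"
    using R.borel_measurable_riesz_mass by (intro nn_integral_cmult) measurable
  also have "\<dots> = ennreal (t / Gamma (\<alpha> + 1)) * (ennreal (Gamma (\<alpha> + 1) / t powr (\<alpha> + 1)) * laplace_stieltjes ?\<mu> t)"
    by (simp only: R.laplace_riesz_mass[OF t])
  also have "\<dots> = ennreal (t / Gamma (\<alpha> + 1) * (Gamma (\<alpha> + 1) / t powr (\<alpha> + 1))) * laplace_stieltjes ?\<mu> t"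
  proof -
    have "0 \<le> t / Gamma (\<alpha> + 1)" "0 \<le> Gamma (\<alpha> + 1) / t powr (\<alpha> + 1)"
      using t alpha_pos Gamma_real_pos[of "\<alpha> + 1"] by simp_all
    then show ?thesis
      by (simp only: ennreal_mult mult.assoc)
  qed
  also have "t / Gamma (\<alpha> + 1) * (Gamma (\<alpha> + 1) / t powr (\<alpha> + 1)) = t powr - \<alpha>"
    using t Gamma_real_pos[of "\<alpha> + 1"] alpha_pos
    by (simp add: powr_add powr_minus field_simps del: Gamma_real_pos)
  finally show ?thesis .
qed

lemma nu_alpha_doubling:
  assumes doubling: "\<forall>s\<ge>s\<^sub>0. \<nu> (2 * s) \<le> C * \<nu> s" and "0 < C" "0 < s\<^sub>0" "2 * s\<^sub>0 \<le> s"
  shows "nu_alpha \<alpha> \<nu> (2 * s) \<le> C\<^sup>2 * 2 powr (2 * \<alpha>) * nu_alpha \<alpha> \<nu> s"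
proof -
  let ?\<mu> = "LS_measure \<nu>" and ?G = "LS_cdf \<nu>"
  interpret R: riesz_kernel ?\<mu> \<alpha>
    by (rule riesz_kernel_LS_measure)
  interpret G: stieltjes_cdf ?G
    by (rule stieltjes_cdf_LS_cdf)
  have G_s: "?G s \<le> C * ?G (s / 2)"
    using LS_cdf_doubling[OF doubling, of "s / 2"] assms by simp
  have "?G (2 * s) \<le> C * ?G s"
    using assms by (intro LS_cdf_doubling[OF doubling]) auto
  also have "\<dots> \<le> C * (C * ?G (s / 2))"
    using G_s assms by simp
  finally have "emeasure ?\<mu> {0..2 * s} \<le> ennreal (C\<^sup>2) * emeasure ?\<mu> {0..s / 2}"
    using assms G.nonneg
    by (simp add: LS_measure_eq_interval_measure G.emeasure_Icc_0 ennreal_mult[symmetric] power2_eq_square mult.assoc)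
  then have "riesz_mass ?\<mu> \<alpha> (2 * s) \<le> ennreal (C\<^sup>2 * 2 powr (2 * \<alpha>)) * riesz_mass ?\<mu> \<alpha> s"
    using assms by (intro R.riesz_mass_doubling) auto
  then have "enn2real (riesz_mass ?\<mu> \<alpha> (2 * s))
      \<le> enn2real (ennreal (C\<^sup>2 * 2 powr (2 * \<alpha>)) * riesz_mass ?\<mu> \<alpha> s)"
    using R.riesz_mass_finite[of s] by (intro enn2real_mono) (auto simp: ennreal_mult_less_top)
  then have "enn2real (riesz_mass ?\<mu> \<alpha> (2 * s)) \<le> C\<^sup>2 * 2 powr (2 * \<alpha>) * enn2real (riesz_mass ?\<mu> \<alpha> s)"
    by (simp add: enn2real_mult)
  then have "enn2real (riesz_mass ?\<mu> \<alpha> (2 * s)) / Gamma (\<alpha> + 1)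
      \<le> C\<^sup>2 * 2 powr (2 * \<alpha>) * enn2real (riesz_mass ?\<mu> \<alpha> s) / Gamma (\<alpha> + 1)"
    using Gamma_real_pos[of "\<alpha> + 1"] alpha_pos by (intro divide_right_mono) auto
  moreover have "0 \<le> s" "0 \<le> 2 * s"
    using assms by simp_all
  ultimately show ?thesis
    by (simp only: nu_alpha_eq_riesz_mass times_divide_eq_right)
qed

end

theorem lemma2p2:
  fixes \<nu> :: "real \<Rightarrow> real" and C s\<^sub>0 \<alpha> :: real
  assumes mono: "mono_on {0..} \<nu>"
    and nonneg: "0 \<le> \<nu> 0"
    and laplace: "\<forall>t>0. set_integrable (LS_measure \<nu>) {0..} (\<lambda>r. exp (- (t * r)))"
    and C: "C > 0" and s0: "s\<^sub>0 > 0"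
    and doubling: "\<forall>s\<ge>s\<^sub>0. \<nu> (2 * s) \<le> C * \<nu> s"
    and alpha: "\<alpha> > 0"
  shows "mono_on {0..} (nu_alpha \<alpha> \<nu>)
    \<and> (\<forall>t>0. set_integrable (LS_measure (nu_alpha \<alpha> \<nu>)) {0..} (\<lambda>r. exp (- (t * r)))
          \<and> (LINT r:{0..}|LS_measure (nu_alpha \<alpha> \<nu>). exp (- (t * r)))
              = t powr (- \<alpha>) * (LINT r:{0..}|LS_measure \<nu>. exp (- (t * r))))
    \<and> (\<forall>s\<ge>2 * s\<^sub>0. nu_alpha \<alpha> \<nu> (2 * s) \<le> C\<^sup>2 * 2 powr (2 * \<alpha>) * nu_alpha \<alpha> \<nu> s)"
proof -
  interpret fractional_primitive \<nu> \<alpha>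
    using mono nonneg alpha by unfold_locales
  have "set_integrable (LS_measure (nu_alpha \<alpha> \<nu>)) {0..} (\<lambda>r. exp (- (t * r)))
      \<and> (LINT r:{0..}|LS_measure (nu_alpha \<alpha> \<nu>). exp (- (t * r)))
          = t powr (- \<alpha>) * (LINT r:{0..}|LS_measure \<nu>. exp (- (t * r)))" if t: "0 < t" for t
  proof -
    have "laplace_stieltjes (LS_measure \<nu>) t < \<infinity>"
      using laplace t by (simp add: set_integrable_exp_iff_laplace_finite)
    then have "laplace_stieltjes (LS_measure (nu_alpha \<alpha> \<nu>)) t < \<infinity>"
      by (simp add: laplace_stieltjes_nu_alpha[OF t] ennreal_mult_less_top)
    moreover have "(LINT r:{0..}|LS_measure (nu_alpha \<alpha> \<nu>). exp (- (t * r)))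
        = t powr (- \<alpha>) * (LINT r:{0..}|LS_measure \<nu>. exp (- (t * r)))"
      by (simp add: set_integral_exp_eq_laplace laplace_stieltjes_nu_alpha[OF t] enn2real_mult)
    ultimately show ?thesis
      by (simp add: set_integrable_exp_iff_laplace_finite)
  qed
  then show ?thesis
    using mono_on_nu_alpha nu_alpha_doubling[OF doubling C s0] by blast
qed

end
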